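(* In the online tolling setting described in the context, let $\bm{\pi}$ be any tolling policy producing nonnegative tolls $\boldsymbol{\tau}^{(t)}$, $t\in[T]$, and let $\bm{x}^t$ be the edge flows of the resulting equilibria. Then $$R_T(\bm{\pi})\le\mathbb{E}\Big[\sum_{t=1}^T\boldsymbol{\tau}^{(t)}\cdot(\bm{c}-\bm{x}^t)\Big].$$
   Context: Network: directed graph $G=(V,E)$, edge capacities $\bm{c}=\{c_e\}$, fixed edge travel times $l_e$, $l_P=\sum_{e\in P}l_e$. Finite user set $\mathcal{U}$; user $u$ has fixed outside-option cost $\lambda_u$. In each period $t=1,\dots,T$, O-D pairs $w^t_u$ and values of time $v^t_u\ge0$ are drawn i.i.d. across periods from a distribution $\mathcal{D}$; $\mathcal{P}^t_u$ is the finite set of paths for $w^t_u$. Given tolls $\boldsymbol{\tau}^{(t)}$, the period-$t$ equilibrium assigns each user to a path $P\in\mathcal{P}^t_u$ or the outside option so as to minimize cost ($v^t_ul_P+\sum_{e\in P}\tau^{(t)}_e$ for a path, $\lambda_u$ for the outside option; capacities need not be respected), encoded by binary $f^t_{P,u},f^t_{o,u}$, with edge flows $x^t_e=\sum_u\sum_{P\in\mathcal{P}^t_u:e\in P}f^t_{P,u}$. A tolling policy chooses $\boldsymbol{\tau}^{(t)}$ as a function of $\bm{x}^1,\dots,\bm{x}^{t-1}$. Let $U_t=\sum_u(v^t_u\sum_Pl_Pf^t_{P,u}+\lambda_uf^t_{o,u})$ and $U^*_t$ be the minimum of this objective over binary assignments (each user exactly one path or the outside option) satisfying $\sum_u\sum_{P\ni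 e}f_{P,u}\le c_e$ for all $e$. Regret: $R_T(\bm{\pi})=\mathbb{E}[\sum_{t=1}^T(U_t-U^*_t)]$, expectation over $\mathcal{D}$. *)

theory Defs
  imports "HOL-Probability.Probability"
begin

definition path_edges :: "'v list \<Rightarrow> ('v \<times> 'v) set" where
  "path_edges vs = set (zip vs (tl vs))"

definition is_od_path :: "('v \<times> 'v) set \<Rightarrow> ('v \<times> 'v) \<Rightarrow> 'v list \<Rightarrow> bool" where
  "is_od_path E w vs \<longleftrightarrow> 2 \<le> length vs \<and> hd vs = fst w \<and> last vs = snd w
      \<and> distinct vs \<and> path_edges vs \<subseteq> E"

definition od_paths :: "('v \<times> 'v) set \<Rightarrow> ('v \<times> 'v) \<Rightarrow> 'v list set" where
  "od_paths E w = {vs. is_od_path E w vs}"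

definition path_len :: "('v \<times> 'v \<Rightarrow> real) \<Rightarrow> 'v list \<Rightarrow> real" where
  "path_len l P = (\<Sum>e\<in>path_edges P. l e)"

definition path_toll :: "('v \<times> 'v \<Rightarrow> real) \<Rightarrow> 'v list \<Rightarrow> real" where
  "path_toll \<tau> P = (\<Sum>e\<in>path_edges P. \<tau> e)"

text \<open>An assignment g maps each user to Some P (path P) or None (outside option);
  it is admissible if every user in U uses one of its own O-D paths or the outside option.\<close>
definition admissible :: "('v \<times> 'v) set \<Rightarrow> 'u set \<Rightarrow> ('u \<Rightarrow> 'v \<times> 'v) \<Rightarrow> ('u \<Rightarrow> 'v list option) \<Rightarrow> bool" where
  "admissible E U od g \<longleftrightarrow>
     (\<forall>u\<in>U. case g u of None \<Rightarrow> True | Some P \<Rightarrow> P \<in> od_paths E (od u))"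

definition edge_flow :: "'u set \<Rightarrow> ('u \<Rightarrow> 'v list option) \<Rightarrow> 'v \<times> 'v \<Rightarrow> real" where
  "edge_flow U g e = real (card {u\<in>U. \<exists>P. g u = Some P \<and> e \<in> path_edges P})"

definition user_cost :: "('v \<times> 'v \<Rightarrow> real) \<Rightarrow> real \<Rightarrow> real \<Rightarrow> ('v \<times> 'v \<Rightarrow> real) \<Rightarrow> 'v list option \<Rightarrow> real" where
  "user_cost l lam vt \<tau> o' = (case o' of None \<Rightarrow> lam | Some P \<Rightarrow> vt * path_len l P + path_toll \<tau> P)"

text \<open>Equilibrium under tolls tau: admissible, and every user picks a cost-minimising option
  among its paths and the outside option (capacities need not be respected).\<close>
definition is_equilibrium :: "('v \<times> 'v) set \<Rightarrow> ('v \<times> 'v \<Rightarrow> real) \<Rightarrow> ('u \<Rightarrow> real) \<Rightarrow> 'u set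
     \<Rightarrow> ('u \<Rightarrow> 'v \<times> 'v) \<Rightarrow> ('u \<Rightarrow> real) \<Rightarrow> ('v \<times> 'v \<Rightarrow> real) \<Rightarrow> ('u \<Rightarrow> 'v list option) \<Rightarrow> bool" where
  "is_equilibrium E l lam U od vt \<tau> g \<longleftrightarrow> admissible E U od g \<and>
     (\<forall>u\<in>U. user_cost l (lam u) (vt u) \<tau> (g u) \<le> lam u \<and>
        (\<forall>P\<in>od_paths E (od u). user_cost l (lam u) (vt u) \<tau> (g u) \<le> user_cost l (lam u) (vt u) \<tau> (Some P)))"

definition sys_cost :: "('v \<times> 'v \<Rightarrow> real) \<Rightarrow> ('u \<Rightarrow> real) \<Rightarrow> 'u set \<Rightarrow> ('u \<Rightarrow> real) \<Rightarrow> ('u \<Rightarrow> 'v list option) \<Rightarrow> real" where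
  "sys_cost l lam U vt g = (\<Sum>u\<in>U. case g u of None \<Rightarrow> lam u | Some P \<Rightarrow> vt u * path_len l P)"

definition opt_cost :: "('v \<times> 'v) set \<Rightarrow> ('v \<times> 'v \<Rightarrow> real) \<Rightarrow> ('v \<times> 'v \<Rightarrow> real) \<Rightarrow> ('u \<Rightarrow> real) \<Rightarrow> 'u set
     \<Rightarrow> ('u \<Rightarrow> 'v \<times> 'v) \<Rightarrow> ('u \<Rightarrow> real) \<Rightarrow> real" where
  "opt_cost E l c lam U od vt = Min {sys_cost l lam U vt g | g.
      admissible E U od g \<and> (\<forall>e\<in>E. edge_flow U g e \<le> c e)}"

end

theory Submission
  imports Defs
begin

text \<open>Let \<open>h\<close> be a capacity-feasible assignment attaining \<open>U\<^sup>*\<^sub>t\<close>. In an equilibrium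
  under tolls \<open>\<tau>\<close> no user prefers her option in \<open>h\<close>, so summing private costs over all users gives
  \<open>U\<^sub>t + \<tau>\<cdot>x \<le> U\<^sup>*\<^sub>t + \<tau>\<cdot>x\<^sup>h \<le> U\<^sup>*\<^sub>t + \<tau>\<cdot>c\<close>, where the total toll revenue
  has been rewritten edge by edge and the last step uses \<open>\<tau> \<ge> 0\<close> and \<open>x\<^sup>h \<le> c\<close>. The bound holds
  for every period and every outcome, hence also in expectation.\<close>

lemma set_subset_path_edges_endpoints:
  "2 \<le> length vs \<Longrightarrow> set vs \<subseteq> fst ` path_edges vs \<union> snd ` path_edges vs"
proof (induction vs rule: induct_list012)
  case (3 a b rest)
  have edges: "path_edges (a # b # rest) = insert (a, b) (path_edges (b # rest))"
    by (simp add: path_edges_def)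
  show ?case
  proof (cases rest)
    case Nil
    then show ?thesis by (force simp: path_edges_def)
  next
    case Cons
    then show ?thesis using 3 edges by force
  qed
qed auto

lemma finite_od_paths:
  assumes "finite E"
  shows "finite (od_paths E w)"
proof (rule finite_subset)
  show "od_paths E w \<subseteq> {vs. set vs \<subseteq> fst ` E \<union> snd ` E \<and> distinct vs}"
    using set_subset_path_edges_endpoints
    by (fastforce simp: od_paths_def is_od_path_def)
  show "finite {vs. set vs \<subseteq> fst ` E \<union> snd ` E \<and> distinct vs}"
    using assms by (intro finite_subset_distinct) auto
qed

definition option_toll :: "('v \<times> 'v \<Rightarrow> real) \<Rightarrow> 'v list option \<Rightarrow> real" where
  "option_toll \<tau> o' = (case o' of None \<Rightarrow> 0 | Some P \<Rightarrow> path_toll \<tau> P)"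

lemma sys_cost_plus_option_toll:
  "sys_cost l lam U vt g + (\<Sum>u\<in>U. option_toll \<tau> (g u)) = (\<Sum>u\<in>U. user_cost l (lam u) (vt u) \<tau> (g u))"
proof -
  have "(case o' of None \<Rightarrow> lam u | Some P \<Rightarrow> vt u * path_len l P) + option_toll \<tau> o'
      = user_cost l (lam u) (vt u) \<tau> o'" for o' u
    by (cases o') (auto simp: option_toll_def user_cost_def)
  then show ?thesis by (simp add: sys_cost_def sum.distrib[symmetric])
qed

lemma sum_option_toll_eq_sum_edge_flow:
  assumes "finite E" "finite U" "admissible E U od g"
  shows "(\<Sum>u\<in>U. option_toll \<tau> (g u)) = (\<Sum>e\<in>E. \<tau> e * edge_flow U g e)"
proof -
  let ?uses = "\<lambda>u e. \<exists>P. g u = Some P \<and> e \<in> path_edges P"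
  have "edge_flow U g e = (\<Sum>u\<in>U. if ?uses u e then 1 else 0)" for e
    using \<open>finite U\<close> by (simp add: edge_flow_def sum.If_cases Int_def)
  then have "(\<Sum>e\<in>E. \<tau> e * edge_flow U g e) = (\<Sum>e\<in>E. \<Sum>u\<in>U. if ?uses u e then \<tau> e else 0)"
    by (simp add: sum_distrib_left if_distrib cong: if_cong)
  also have "\<dots> = (\<Sum>u\<in>U. \<Sum>e\<in>E. if ?uses u e then \<tau> e else 0)"
    by (rule sum.swap)
  also have "\<dots> = (\<Sum>u\<in>U. option_toll \<tau> (g u))"
  proof (rule sum.cong[OF refl])
    fix u assume "u \<in> U"
    show "(\<Sum>e\<in>E. if ?uses u e then \<tau> e else 0) = option_toll \<tau> (g u)"
    proof (cases "g u")
      case None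
      then show ?thesis by (simp add: option_toll_def)
    next
      case (Some P)
      then have "path_edges P \<subseteq> E"
        using \<open>admissible E U od g\<close> \<open>u \<in> U\<close>
        by (force simp: admissible_def od_paths_def is_od_path_def)
      then show ?thesis
        using Some \<open>finite E\<close>
        by (simp add: option_toll_def path_toll_def sum.If_cases inf.absorb2)
    qed
  qed
  finally show ?thesis by simp
qed

lemma equilibrium_user_cost_le:
  assumes "is_equilibrium E l lam U od vt \<tau> g" "admissible E U od h" "u \<in> U"
  shows "user_cost l (lam u) (vt u) \<tau> (g u) \<le> user_cost l (lam u) (vt u) \<tau> (h u)"
proof (cases "h u")
  case None
  then show ?thesis using assms(1,3) by (simp add: is_equilibrium_def user_cost_def)
next
  case (Some P)
  then have "P \<in> od_paths E (od u)" using assms(2,3) by (force simp: admissible_def)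
  then show ?thesis using assms(1,3) Some by (simp add: is_equilibrium_def)
qed

lemma equilibrium_tolled_cost_le:
  assumes "finite E" "finite U" "is_equilibrium E l lam U od vt \<tau> g" "admissible E U od h"
  shows "sys_cost l lam U vt g + (\<Sum>e\<in>E. \<tau> e * edge_flow U g e)
      \<le> sys_cost l lam U vt h + (\<Sum>e\<in>E. \<tau> e * edge_flow U h e)"
proof -
  have "admissible E U od g" using assms(3) by (simp add: is_equilibrium_def)
  have "sys_cost l lam U vt g + (\<Sum>u\<in>U. option_toll \<tau> (g u))
      \<le> sys_cost l lam U vt h + (\<Sum>u\<in>U. option_toll \<tau> (h u))"
    unfolding sys_cost_plus_option_toll
    using equilibrium_user_cost_le[OF assms(3,4)] by (rule sum_mono)
  then show ?thesis
    using sum_option_toll_eq_sum_edge_flow[OF assms(1,2) \<open>admissible E U od g\<close>]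
      sum_option_toll_eq_sum_edge_flow[OF assms(1,2,4)]
    by simp
qed

lemma opt_cost_attained:
  assumes "finite E" "finite U" "\<forall>e\<in>E. 0 \<le> c e"
  obtains h where "admissible E U od h" "\<forall>e\<in>E. edge_flow U h e \<le> c e"
    "opt_cost E l c lam U od vt = sys_cost l lam U vt h"
proof -
  let ?feasible = "\<lambda>g. admissible E U od g \<and> (\<forall>e\<in>E. edge_flow U g e \<le> c e)"
  let ?S = "{sys_cost l lam U vt g | g. ?feasible g}"
  let ?A = "PiE U (\<lambda>u. insert None (Some ` od_paths E (od u)))"
  have "?S \<subseteq> sys_cost l lam U vt ` ?A"
  proof
    fix x assume "x \<in> ?S"
    then obtain g where "?feasible g" and x: "x = sys_cost l lam U vt g" by blast
    have "restrict g U \<in> ?A"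
    proof (rule PiE_I)
      fix u assume "u \<in> U"
      then show "restrict g U u \<in> insert None (Some ` od_paths E (od u))"
        using \<open>?feasible g\<close> by (cases "g u") (auto simp: admissible_def)
    qed simp
    moreover have "sys_cost l lam U vt (restrict g U) = x"
      unfolding x sys_cost_def by (rule sum.cong) auto
    ultimately show "x \<in> sys_cost l lam U vt ` ?A" by force
  qed
  moreover have "finite ?A"
    using assms(1,2) by (intro finite_PiE) (simp_all add: finite_od_paths)
  ultimately have "finite ?S" by (blast intro: finite_surj)
  moreover have "?S \<noteq> {}"
    using assms(3) by (auto simp: admissible_def edge_flow_def intro!: exI[of _ "\<lambda>_. None"])
  ultimately have "opt_cost E l c lam U od vt \<in> ?S"
    unfolding opt_cost_def by (rule Min_in)
  then show ?thesis using that by blast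
qed

lemma sys_cost_minus_opt_cost_le_toll_slack:
  assumes "finite E" "finite U" "\<forall>e\<in>E. 0 \<le> c e" "\<forall>e\<in>E. 0 \<le> \<tau> e"
    and "is_equilibrium E l lam U od vt \<tau> g"
  shows "sys_cost l lam U vt g - opt_cost E l c lam U od vt
      \<le> (\<Sum>e\<in>E. \<tau> e * (c e - edge_flow U g e))"
proof -
  obtain h where h: "admissible E U od h" "\<forall>e\<in>E. edge_flow U h e \<le> c e"
    and opt: "opt_cost E l c lam U od vt = sys_cost l lam U vt h"
    using opt_cost_attained[OF assms(1-3)] .
  have "(\<Sum>e\<in>E. \<tau> e * edge_flow U h e) \<le> (\<Sum>e\<in>E. \<tau> e * c e)"
    using h(2) assms(4) by (intro sum_mono mult_left_mono) auto
  then show ?thesis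
    using equilibrium_tolled_cost_le[OF assms(1,2,5) h(1)] opt
    by (simp add: right_diff_distrib sum_subtractf)
qed

theorem lemma1:
  fixes M :: "'a measure"
    and D :: "('u \<Rightarrow> ('v \<times> 'v) \<times> real) measure"
    and E :: "('v \<times> 'v) set"
    and c l :: "'v \<times> 'v \<Rightarrow> real"
    and U :: "'u set"
    and lam :: "'u \<Rightarrow> real"
    and T :: nat
    and Inst :: "nat \<Rightarrow> 'a \<Rightarrow> ('u \<Rightarrow> ('v \<times> 'v) \<times> real)"
    and pol :: "nat \<Rightarrow> (nat \<Rightarrow> 'v \<times> 'v \<Rightarrow> real) \<Rightarrow> ('v \<times> 'v \<Rightarrow> real)"
    and tol :: "nat \<Rightarrow> 'a \<Rightarrow> 'v \<times> 'v \<Rightarrow> real"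
    and asg :: "nat \<Rightarrow> 'a \<Rightarrow> 'u \<Rightarrow> 'v list option"
  assumes "prob_space M"
    and "finite E" and "finite U"
    and "\<forall>e\<in>E. 0 \<le> c e"
    and "\<forall>t\<in>{1..T}. Inst t \<in> measurable M D \<and> distr M D (Inst t) = D"
    and "prob_space.indep_vars M (\<lambda>_. D) Inst {1..T}"
    and "\<forall>t\<in>{1..T}. \<forall>\<omega>\<in>space M. \<forall>u\<in>U. 0 \<le> snd (Inst t \<omega> u)"
    and "\<forall>t\<in>{1..T}. \<forall>\<omega>\<in>space M.
           tol t \<omega> = pol t (\<lambda>s. if 1 \<le> s \<and> s < t then edge_flow U (asg s \<omega>) else (\<lambda>_. 0))"
    and "\<forall>t\<in>{1..T}. \<forall>\<omega>\<in>space M. \<forall>e\<in>E. 0 \<le> tol t \<omega> e"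
    and "\<forall>t\<in>{1..T}. \<forall>\<omega>\<in>space M.
           is_equilibrium E l lam U (\<lambda>u. fst (Inst t \<omega> u)) (\<lambda>u. snd (Inst t \<omega> u)) (tol t \<omega>) (asg t \<omega>)"
    and "integrable M (\<lambda>\<omega>. \<Sum>t=1..T.
           sys_cost l lam U (\<lambda>u. snd (Inst t \<omega> u)) (asg t \<omega>)
           - opt_cost E l c lam U (\<lambda>u. fst (Inst t \<omega> u)) (\<lambda>u. snd (Inst t \<omega> u)))"
    and "integrable M (\<lambda>\<omega>. \<Sum>t=1..T. \<Sum>e\<in>E. tol t \<omega> e * (c e - edge_flow U (asg t \<omega>) e))"
  shows "(\<integral>\<omega>. (\<Sum>t=1..T.
           sys_cost l lam U (\<lambda>u. snd (Inst t \<omega> u)) (asg t \<omega>)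
           - opt_cost E l c lam U (\<lambda>u. fst (Inst t \<omega> u)) (\<lambda>u. snd (Inst t \<omega> u))) \<partial>M)
         \<le> (\<integral>\<omega>. (\<Sum>t=1..T. \<Sum>e\<in>E. tol t \<omega> e * (c e - edge_flow U (asg t \<omega>) e)) \<partial>M)"
proof (rule integral_mono)
  fix \<omega> assume "\<omega> \<in> space M"
  then show "(\<Sum>t=1..T. sys_cost l lam U (\<lambda>u. snd (Inst t \<omega> u)) (asg t \<omega>)
         - opt_cost E l c lam U (\<lambda>u. fst (Inst t \<omega> u)) (\<lambda>u. snd (Inst t \<omega> u)))
       \<le> (\<Sum>t=1..T. \<Sum>e\<in>E. tol t \<omega> e * (c e - edge_flow U (asg t \<omega>) e))"
    using sys_cost_minus_opt_cost_le_toll_slack[OF assms(2-4)] assms(9,10)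
    by (intro sum_mono) blast
qed (use assms(11,12) in auto)

end
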